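(* Let $F,H_1,\dots,H_m,G_1,\dots,G_n,F_{i,j}$ ($1\le i\le m$, $1\le j\le n$) be constant real symmetric $p\times p$ matrices and define $\mathcal{B}(\mathbf{x},\mathbf{y})=F+\sum_{i=1}^m x_iH_i+\sum_{j=1}^n y_jG_j+\sum_{i=1}^m\sum_{j=1}^n x_iy_jF_{i,j}$ for $\mathbf{x}\in\mathbb{R}^m,\mathbf{y}\in\mathbb{R}^n$. Let $\Gamma=\tfrac12(F_{i,j})_{i,j}$ be the $mp\times np$ block matrix with $(i,j)$ block $\tfrac12F_{i,j}$, $\Omega_1=(H_1\ \cdots\ H_m)$, $\Omega_2=(G_1\ \cdots\ G_n)$, and $M=\begin{pmatrix}0&\Gamma\\ \Gamma^{\mathsf T}&0\end{pmatrix}\in\mathcal{S}^{(m+n)p}$. Let $M=V^{\mathsf T}DV$ be an eigendecomposition with $V$ orthogonal and $D$ diagonal, let $D^+$ be obtained from $D$ by replacing negative entries with $0$, $D^-=D^+-D$, $M_1=V^{\mathsf T}D^+V$, $M_2=V^{\mathsf T}D^-V$. With $\mathbf{w}=\begin{pmatrix}\mathbf{x}\otimes I\\ \mathbf{y}\otimes I\end{pmatrix}$ ($I$ the $p\times p$ identity, $\mathbf{x},\mathbf{y}$ column vectors), define $\mathcal{B}^+(\mathbf{x},\mathbf{y})=\mathbf{w}^{\mathsf T}M_1\mathbf{w}+(\Omega_1\ \Omega_2)\mathbf{w}+F$ and $\mathcal{B}^-(\mathbf{x},\mathbf{y})=\mathbf{w}^{\mathsf T}M_2\mathbf{w}$.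 Then $\mathcal{B}(\mathbf{x},\mathbf{y})=\mathcal{B}^+(\mathbf{x},\mathbf{y})-\mathcal{B}^-(\mathbf{x},\mathbf{y})$ for all $(\mathbf{x},\mathbf{y})$, and both $\mathcal{B}^+$ and $\mathcal{B}^-$ are psd-convex on $\mathbb{R}^{m+n}$.
   Context: $\mathcal{S}^k$ is the space of real symmetric $k\times k$ matrices; $A\preceq B$ means $B-A$ is positive semidefinite. $\otimes$ is the Kronecker product. A matrix-valued function $\mathcal{C}\colon\mathbb{R}^N\to\mathcal{S}^p$ is psd-convex on a convex set $K$ if $\mathcal{C}(\mu\mathbf{z}_1+(1-\mu)\mathbf{z}_2)\preceq\mu\mathcal{C}(\mathbf{z}_1)+(1-\mu)\mathcal{C}(\mathbf{z}_2)$ for all $\mathbf{z}_1,\mathbf{z}_2\in K$, $\mu\in(0,1)$. *)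

theory Defs
  imports "HOL-Analysis.Analysis"
begin

text \<open>Block matrices of size
  (m+n)p are indexed by the type ('m + 'n) \<times> 'p, where the index (Inl i, a)
  is row a of block i (first group) and (Inr j, a) row a of block j (second group).\<close>

definition symmetric_mat :: "real^'k::finite^'k::finite \<Rightarrow> bool" where
  "symmetric_mat A \<longleftrightarrow> transpose A = A"

definition psd :: "real^'k::finite^'k::finite \<Rightarrow> bool" where
  "psd A \<longleftrightarrow> symmetric_mat A \<and> (\<forall>v. 0 \<le> v \<bullet> (A *v v))"

definition psd_le :: "real^'k::finite^'k::finite \<Rightarrow> real^'k::finite^'k::finite \<Rightarrow> bool" where
  "psd_le A B \<longleftrightarrow> psd (B - A)"

definition psd_convex_on :: "'a::real_vector set \<Rightarrow> ('a \<Rightarrow> real^'k::finite^'k::finite) \<Rightarrow> bool" where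
  "psd_convex_on K C \<longleftrightarrow> (\<forall>z1\<in>K. \<forall>z2\<in>K. \<forall>\<mu>::real. 0 < \<mu> \<and> \<mu> < 1 \<longrightarrow>
      psd_le (C (\<mu> *\<^sub>R z1 + (1 - \<mu>) *\<^sub>R z2)) (\<mu> *\<^sub>R C z1 + (1 - \<mu>) *\<^sub>R C z2))"

definition Bfun :: "real^'p::finite^'p::finite \<Rightarrow> ('m::finite \<Rightarrow> real^'p::finite^'p::finite) \<Rightarrow> ('n::finite \<Rightarrow> real^'p::finite^'p::finite)
     \<Rightarrow> ('m::finite \<Rightarrow> 'n::finite \<Rightarrow> real^'p::finite^'p::finite) \<Rightarrow> real^'m::finite \<Rightarrow> real^'n::finite \<Rightarrow> real^'p::finite^'p::finite" where
  "Bfun F H G Fm x y = F + (\<Sum>i\<in>UNIV. (x$i) *\<^sub>R H i) + (\<Sum>j\<in>UNIV. (y$j) *\<^sub>R G j)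
      + (\<Sum>i\<in>UNIV. \<Sum>j\<in>UNIV. (x$i * y$j) *\<^sub>R Fm i j)"

definition Gamma :: "('m::finite \<Rightarrow> 'n::finite \<Rightarrow> real^'p::finite^'p::finite) \<Rightarrow> real^('n::finite \<times> 'p::finite)^('m::finite \<times> 'p::finite)" where
  "Gamma Fm = (\<chi> r c. (1/2) * (Fm (fst r) (fst c) $ snd r $ snd c))"

definition Mmat :: "('m::finite \<Rightarrow> 'n::finite \<Rightarrow> real^'p::finite^'p::finite) \<Rightarrow> real^(('m::finite + 'n::finite) \<times> 'p::finite)^(('m::finite + 'n::finite) \<times> 'p::finite)" where
  "Mmat Fm = (\<chi> r c. case (r, c) of
       ((Inl i, a), (Inr j, b)) \<Rightarrow> Gamma Fm $ (i,a) $ (j,b)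
     | ((Inr j, a), (Inl i, b)) \<Rightarrow> transpose (Gamma Fm) $ (j,a) $ (i,b)
     | _ \<Rightarrow> 0)"

definition Omega :: "('m::finite \<Rightarrow> real^'p::finite^'p::finite) \<Rightarrow> ('n::finite \<Rightarrow> real^'p::finite^'p::finite) \<Rightarrow> real^(('m::finite + 'n::finite) \<times> 'p::finite)^'p::finite" where
  "Omega H G = (\<chi> a c. case c of (Inl i, b) \<Rightarrow> H i $ a $ b | (Inr j, b) \<Rightarrow> G j $ a $ b)"

definition wmat :: "real^'m::finite \<Rightarrow> real^'n::finite \<Rightarrow> real^'p::finite^(('m::finite + 'n::finite) \<times> 'p::finite)" where
  "wmat x y = (\<chi> r b. case r of
       (Inl i, a) \<Rightarrow> x$i * (if a = b then 1 else 0)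
     | (Inr j, a) \<Rightarrow> y$j * (if a = b then 1 else 0))"

definition Dplus :: "real^'k::finite^'k::finite \<Rightarrow> real^'k::finite^'k::finite" where
  "Dplus D = (\<chi> i j. if i = j then max (D$i$j) 0 else D$i$j)"

definition Dminus :: "real^'k::finite^'k::finite \<Rightarrow> real^'k::finite^'k::finite" where
  "Dminus D = Dplus D - D"

definition Bplus :: "real^'p::finite^'p::finite \<Rightarrow> ('m::finite \<Rightarrow> real^'p::finite^'p::finite) \<Rightarrow> ('n::finite \<Rightarrow> real^'p::finite^'p::finite)
     \<Rightarrow> real^(('m::finite + 'n::finite) \<times> 'p::finite)^(('m::finite + 'n::finite) \<times> 'p::finite) \<Rightarrow> real^(('m::finite + 'n::finite) \<times> 'p::finite)^(('m::finite + 'n::finite) \<times> 'p::finite)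
     \<Rightarrow> real^'m::finite \<Rightarrow> real^'n::finite \<Rightarrow> real^'p::finite^'p::finite" where
  "Bplus F H G V D x y =
     transpose (wmat x y) ** (transpose V ** Dplus D ** V) ** wmat x y + Omega H G ** wmat x y + F"

definition Bminus :: "real^(('m::finite + 'n::finite) \<times> 'p::finite)^(('m::finite + 'n::finite) \<times> 'p::finite) \<Rightarrow> real^(('m::finite + 'n::finite) \<times> 'p::finite)^(('m::finite + 'n::finite) \<times> 'p::finite)
     \<Rightarrow> real^'m::finite \<Rightarrow> real^'n::finite \<Rightarrow> real^'p::finite^'p::finite" where
  "Bminus V D x y = transpose (wmat x y) ** (transpose V ** Dminus D ** V) ** wmat x y"

end

theory Submission
  imports Defs
begin

text \<open>
  With \<open>w = w(x, y)\<close>, which is linear in \<open>(x, y)\<close>, one has \<open>w\<^sup>T M w = \<Sum>\<^sub>i\<^sub>j x\<^sub>i y\<^sub>j F\<^sub>i\<^sub>j\<close>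
  (this uses the symmetry of the \<open>F\<^sub>i\<^sub>j\<close>, since the lower-left block of \<open>M\<close> is \<open>\<Gamma>\<^sup>T\<close>) and
  \<open>(\<Omega>\<^sub>1 \<Omega>\<^sub>2) w = \<Sum>\<^sub>i x\<^sub>i H\<^sub>i + \<Sum>\<^sub>j y\<^sub>j G\<^sub>j\<close>; together with \<open>M = M\<^sub>1 - M\<^sub>2\<close>, which comes from
  \<open>D = D\<^sup>+ - D\<^sup>-\<close>, this gives \<open>\<B> = \<B>\<^sup>+ - \<B>\<^sup>-\<close>.
  Both \<open>M\<^sub>1\<close> and \<open>M\<^sub>2\<close> are congruent to diagonal matrices with nonnegative entries, hence
  positive semidefinite, and for psd \<open>P\<close> and linear \<open>W\<close> the map \<open>Q(z) = W(z)\<^sup>T P W(z)\<close> is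
  psd-convex by the identity
  \<open>\<mu> Q(z\<^sub>1) + (1 - \<mu>) Q(z\<^sub>2) - Q(\<mu> z\<^sub>1 + (1 - \<mu>) z\<^sub>2) = \<mu> (1 - \<mu>) (W z\<^sub>1 - W z\<^sub>2)\<^sup>T P (W z\<^sub>1 - W z\<^sub>2)\<close>;
  adding an affine term does not affect this.
\<close>

lemma congruence_entry:
  fixes W :: "real^'p::finite^'k::finite" and P :: "real^'k^'k"
  shows "(transpose W ** P ** W) $ a $ b = (\<Sum>r\<in>UNIV. \<Sum>c\<in>UNIV. W $ r $ a * P $ r $ c * W $ c $ b)"
  unfolding matrix_matrix_mult_def transpose_def
  by (simp add: sum_distrib_right) (rule sum.swap)

lemma congruence_diff:
  fixes W :: "real^'p::finite^'k::finite" and A B :: "real^'k^'k"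
  shows "transpose W ** A ** W - transpose W ** B ** W = transpose W ** (A - B) ** W"
  by (simp add: vec_eq_iff congruence_entry sum_subtractf[symmetric] left_diff_distrib right_diff_distrib)

lemma congruence_convex_combination:
  fixes W1 W2 :: "real^'p::finite^'k::finite" and P :: "real^'k^'k"
  shows "\<mu> *\<^sub>R (transpose W1 ** P ** W1) + (1 - \<mu>) *\<^sub>R (transpose W2 ** P ** W2)
           - transpose (\<mu> *\<^sub>R W1 + (1 - \<mu>) *\<^sub>R W2) ** P ** (\<mu> *\<^sub>R W1 + (1 - \<mu>) *\<^sub>R W2)
         = (\<mu> * (1 - \<mu>)) *\<^sub>R (transpose (W1 - W2) ** P ** (W1 - W2))"
  unfolding vec_eq_iff vector_minus_component vector_add_component vector_scaleR_component congruence_entry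
  by (simp add: sum_distrib_left sum_subtractf[symmetric] sum.distrib[symmetric] algebra_simps)

lemma psd_congruence:
  fixes W :: "real^'p::finite^'k::finite" and P :: "real^'k^'k"
  assumes "psd P"
  shows "psd (transpose W ** P ** W)"
proof -
  have sym: "transpose P = P" and nonneg: "\<And>u. 0 \<le> u \<bullet> (P *v u)"
    using assms unfolding psd_def symmetric_mat_def by auto
  have "transpose (transpose W ** P ** W) = transpose W ** P ** W"
    by (simp only: matrix_transpose_mul transpose_transpose sym matrix_mul_assoc)
  moreover have "v \<bullet> ((transpose W ** P ** W) *v v) = (W *v v) \<bullet> (P *v (W *v v))" for v
  proof -
    have "v \<bullet> ((transpose W ** P ** W) *v v) = v \<bullet> (transpose W *v (P *v (W *v v)))"
      by (simp only: matrix_vector_mul_assoc[symmetric])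
    also have "\<dots> = (W *v v) \<bullet> (P *v (W *v v))"
      by (simp only: transpose_matrix_vector inner_commute[of v] dot_lmul_matrix) (rule inner_commute)
    finally show ?thesis .
  qed
  ultimately show ?thesis
    using nonneg unfolding psd_def symmetric_mat_def by simp
qed

lemma psd_scaleR:
  assumes "psd A" and "0 \<le> c"
  shows "psd (c *\<^sub>R A)"
proof -
  have "(c *\<^sub>R A) *v v = c *\<^sub>R (A *v v)" for v
    by (simp add: vec_eq_iff matrix_vector_mult_def sum_distrib_left mult.assoc)
  with assms show ?thesis
    unfolding psd_def symmetric_mat_def by (simp add: transpose_scalar)
qed

lemma psd_diagonal:
  fixes D :: "real^'k::finite^'k::finite"
  assumes "\<And>r c. r \<noteq> c \<Longrightarrow> D $ r $ c = 0" and "\<And>r. 0 \<le> D $ r $ r"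
  shows "psd D"
proof -
  have D_eq: "D = (\<chi> r c. if r = c then D $ r $ r else 0)"
    using assms(1) by (simp add: vec_eq_iff)
  have "transpose D = D"
    using assms(1) by (simp add: vec_eq_iff transpose_def) metis
  moreover have "v \<bullet> (D *v v) = (\<Sum>r\<in>UNIV. D $ r $ r * (v $ r * v $ r))" for v
    by (subst D_eq) (simp add: inner_vec_def matrix_vector_mult_def if_distrib if_distribR mult_ac cong: if_cong)
  moreover have "0 \<le> (\<Sum>r\<in>UNIV. D $ r $ r * (v $ r * v $ r))" for v
    by (intro sum_nonneg mult_nonneg_nonneg assms(2) zero_le_square)
  ultimately show ?thesis
    unfolding psd_def symmetric_mat_def by simp
qed

lemma psd_Dplus:
  assumes "\<And>r c. r \<noteq> c \<Longrightarrow> D $ r $ c = 0"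
  shows "psd (Dplus D)"
  by (rule psd_diagonal) (simp_all add: Dplus_def assms)

lemma psd_Dminus:
  assumes "\<And>r c. r \<noteq> c \<Longrightarrow> D $ r $ c = 0"
  shows "psd (Dminus D)"
  by (rule psd_diagonal) (simp_all add: Dminus_def Dplus_def assms)

lemma psd_convex_on_congruence_plus_affine:
  fixes P :: "real^'k::finite^'k::finite" and W :: "'a::real_vector \<Rightarrow> real^'p::finite^'k"
    and A :: "'a \<Rightarrow> real^'p^'p"
  assumes "psd P" and "linear W" and "linear A"
  shows "psd_convex_on UNIV (\<lambda>z. transpose (W z) ** P ** W z + A z + C)"
proof -
  let ?Q = "\<lambda>X. transpose X ** P ** X"
  let ?f = "\<lambda>z. ?Q (W z) + A z + C"
  have "psd (\<mu> *\<^sub>R ?f z1 + (1 - \<mu>) *\<^sub>R ?f z2 - ?f (\<mu> *\<^sub>R z1 + (1 - \<mu>) *\<^sub>R z2))"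
    if "0 < \<mu>" "\<mu> < 1" for z1 z2 \<mu>
  proof -
    have "\<mu> *\<^sub>R ?f z1 + (1 - \<mu>) *\<^sub>R ?f z2 - ?f (\<mu> *\<^sub>R z1 + (1 - \<mu>) *\<^sub>R z2)
        = \<mu> *\<^sub>R ?Q (W z1) + (1 - \<mu>) *\<^sub>R ?Q (W z2) - ?Q (\<mu> *\<^sub>R W z1 + (1 - \<mu>) *\<^sub>R W z2)"
      unfolding linear_add[OF assms(2)] linear_scale[OF assms(2)]
        linear_add[OF assms(3)] linear_scale[OF assms(3)]
      by (simp add: algebra_simps)
    also have "\<dots> = (\<mu> * (1 - \<mu>)) *\<^sub>R ?Q (W z1 - W z2)"
      by (rule congruence_convex_combination)
    finally show ?thesis
      using that by (simp add: psd_scaleR psd_congruence assms(1))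
  qed
  then show ?thesis
    unfolding psd_convex_on_def psd_le_def by blast
qed

lemma sum_UNIV_blocks:
  fixes f :: "('m::finite + 'n::finite) \<times> 'p::finite \<Rightarrow> real"
  shows "(\<Sum>r\<in>UNIV. f r) = (\<Sum>i\<in>UNIV. \<Sum>a\<in>UNIV. f (Inl i, a)) + (\<Sum>j\<in>UNIV. \<Sum>a\<in>UNIV. f (Inr j, a))"
proof -
  have "(\<Sum>r\<in>UNIV. f r) = (\<Sum>s\<in>UNIV. \<Sum>a\<in>UNIV. f (s, a))"
    by (simp add: sum.cartesian_product UNIV_Times_UNIV[symmetric] del: UNIV_Times_UNIV)
  also have "\<dots> = (\<Sum>i\<in>UNIV. \<Sum>a\<in>UNIV. f (Inl i, a)) + (\<Sum>j\<in>UNIV. \<Sum>a\<in>UNIV. f (Inr j, a))"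
    by (simp add: UNIV_Plus_UNIV[symmetric] sum.Plus del: UNIV_Plus_UNIV)
  finally show ?thesis .
qed

lemma wmat_components [simp]:
  "wmat x y $ (Inl i, a) $ b = (if a = b then x $ i else 0)"
  "wmat x y $ (Inr j, a) $ b = (if a = b then y $ j else 0)"
  by (simp_all add: wmat_def)

lemma sum_wmat_column:
  "(\<Sum>r\<in>UNIV. wmat x y $ r $ a * f r) = (\<Sum>i\<in>UNIV. x $ i * f (Inl i, a)) + (\<Sum>j\<in>UNIV. y $ j * f (Inr j, a))"
  by (simp add: sum_UNIV_blocks if_distrib if_distribR cong: if_cong)

lemma linear_wmat: "linear (\<lambda>z. wmat (fst z) (snd z))"
  by (rule linearI) (simp_all add: vec_eq_iff wmat_def algebra_simps split: sum.splits prod.splits)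

lemma linear_Omega_wmat: "linear (\<lambda>z. Omega H G ** wmat (fst z) (snd z))"
proof -
  have "linear (\<lambda>X. Omega H G ** X)"
    by (rule linearI) (simp_all add: matrix_add_ldistrib matrix_scalar_ac scalar_matrix_assoc)
  from linear_compose[OF linear_wmat this] show ?thesis
    by (simp add: o_def)
qed

lemma Omega_wmat_entry:
  "(Omega H G ** wmat x y) $ a $ b = (\<Sum>i\<in>UNIV. x $ i * H i $ a $ b) + (\<Sum>j\<in>UNIV. y $ j * G j $ a $ b)"
  unfolding matrix_matrix_mult_def
  by (subst mult.commute) (simp add: sum_wmat_column Omega_def mult.commute)

lemma Mmat_components:
  "Mmat Fm $ (Inl i, a) $ (Inl i', b) = 0"
  "Mmat Fm $ (Inr j, a) $ (Inr j', b) = 0"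
  "Mmat Fm $ (Inl i, a) $ (Inr j, b) = Fm i j $ a $ b / 2"
  "Mmat Fm $ (Inr j, a) $ (Inl i, b) = Fm i j $ b $ a / 2"
  by (simp_all add: Mmat_def Gamma_def transpose_def)

lemma congruence_Mmat_wmat_entry:
  assumes "\<And>i j. symmetric_mat (Fm i j)"
  shows "(transpose (wmat x y) ** Mmat Fm ** wmat x y) $ a $ b
       = (\<Sum>i\<in>UNIV. \<Sum>j\<in>UNIV. (x $ i * y $ j) * Fm i j $ a $ b)"
proof -
  let ?c = "\<lambda>i j. Fm i j $ a $ b / 2"
  have sym: "Fm i j $ b $ a = Fm i j $ a $ b" for i j
    using assms[of i j] unfolding symmetric_mat_def transpose_def by (metis vec_lambda_beta)
  have "(transpose (wmat x y) ** Mmat Fm ** wmat x y) $ a $ b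
      = (\<Sum>r\<in>UNIV. wmat x y $ r $ a * (\<Sum>c\<in>UNIV. wmat x y $ c $ b * Mmat Fm $ r $ c))"
    by (simp add: congruence_entry sum_distrib_left mult_ac)
  also have "\<dots> = (\<Sum>i\<in>UNIV. x $ i * (\<Sum>j\<in>UNIV. y $ j * ?c i j)) + (\<Sum>j\<in>UNIV. y $ j * (\<Sum>i\<in>UNIV. x $ i * ?c i j))"
    by (simp add: sum_wmat_column Mmat_components sym)
  also have "(\<Sum>j\<in>UNIV. y $ j * (\<Sum>i\<in>UNIV. x $ i * ?c i j)) = (\<Sum>i\<in>UNIV. x $ i * (\<Sum>j\<in>UNIV. y $ j * ?c i j))"
    unfolding sum_distrib_left by (subst sum.swap) (simp add: mult.left_commute)
  finally show ?thesis
    by (simp add: sum_distrib_left mult_ac)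
qed

lemma Bfun_eq_congruence_Mmat:
  assumes "\<And>i j. symmetric_mat (Fm i j)"
  shows "Bfun F H G Fm x y = transpose (wmat x y) ** Mmat Fm ** wmat x y + Omega H G ** wmat x y + F"
  by (simp add: vec_eq_iff Bfun_def congruence_Mmat_wmat_entry[OF assms] Omega_wmat_entry)

theorem theorem7:
  fixes F :: "real^'p::finite^'p"
    and H :: "'m::finite \<Rightarrow> real^'p^'p"
    and G :: "'n::finite \<Rightarrow> real^'p^'p"
    and Fm :: "'m \<Rightarrow> 'n \<Rightarrow> real^'p^'p"
    and V D :: "real^(('m + 'n) \<times> 'p)^(('m + 'n) \<times> 'p)"
  assumes "symmetric_mat F"
    and "\<And>i. symmetric_mat (H i)"
    and "\<And>j. symmetric_mat (G j)"
    and "\<And>i j. symmetric_mat (Fm i j)"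
    and "orthogonal_matrix V"
    and "\<And>r c. r \<noteq> c \<Longrightarrow> D $ r $ c = 0"
    and "Mmat Fm = transpose V ** D ** V"
  shows "(\<forall>x y. Bfun F H G Fm x y = Bplus F H G V D x y - Bminus V D x y)
     \<and> psd_convex_on UNIV (\<lambda>z. Bplus F H G V D (fst z) (snd z))
     \<and> psd_convex_on UNIV (\<lambda>z. Bminus V D (fst z) (snd z))"
proof -
  let ?M1 = "transpose V ** Dplus D ** V" and ?M2 = "transpose V ** Dminus D ** V"
  have psd_M1: "psd ?M1" and psd_M2: "psd ?M2"
    using assms(6) by (simp_all add: psd_congruence psd_Dplus psd_Dminus)
  have M_split: "Mmat Fm = ?M1 - ?M2"
    by (simp add: congruence_diff Dminus_def assms(7))
  have "Bfun F H G Fm x y = Bplus F H G V D x y - Bminus V D x y" for x y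
    unfolding Bfun_eq_congruence_Mmat[OF assms(4)] M_split congruence_diff[symmetric] Bplus_def Bminus_def
    by (simp add: algebra_simps)
  moreover have "psd_convex_on UNIV (\<lambda>z. Bplus F H G V D (fst z) (snd z))"
    unfolding Bplus_def
    by (rule psd_convex_on_congruence_plus_affine[OF psd_M1 linear_wmat linear_Omega_wmat])
  moreover have "psd_convex_on UNIV (\<lambda>z. Bminus V D (fst z) (snd z))"
    using psd_convex_on_congruence_plus_affine[OF psd_M2 linear_wmat linear_zero, of 0]
    by (simp add: Bminus_def)
  ultimately show ?thesis
    by blast
qed

end
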